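(* Let $(\mathfrak J,B,\omega)$ be a symplectic pseudo-euclidean Jordan algebra over an algebraically closed field $\mathbb K$ (of characteristic zero). Then there exist two subalgebras $\mathcal U$ and $\mathcal V$ of $\mathfrak J$ such that $(\mathfrak J=\mathcal U\oplus\mathcal V,B,\omega)$ is a symplectic Jordan-Manin algebra.
   Context: All algebras are finite-dimensional. A Jordan algebra is a commutative algebra with $x(yx^2)=(xy)x^2$; $(\mathfrak J,B)$ is pseudo-euclidean if $B$ is nondegenerate symmetric with $B(xy,z)=B(x,yz)$. A symplectic form is a nondegenerate skew-symmetric bilinear $\omega$ with $\omega(xy,z)+\omega(yz,x)+\omega(zx,y)=0$. A Jordan-Manin algebra is a pseudo-euclidean Jordan algebra $(\mathfrak J,B)$ with $\mathfrak J=\mathcal U\oplus\mathcal V$ (vector space direct sum) for two subalgebras $\mathcal U,\mathcal V$ that are totally isotropic for $B$. It is a symplectic Jordan-Manin algebra if moreover it carries a symplectic form $\omega$ with $\omega(\mathcal U,\mathcal U)=\omega(\mathcal V,\mathcal V)=\{0\}$. *)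

theory Defs
  imports Main "HOL-Computational_Algebra.Polynomial"
begin

definition alg_closed :: "'k::field itself \<Rightarrow> bool" where
  "alg_closed _ \<longleftrightarrow> (\<forall>p::'k poly. degree p > 0 \<longrightarrow> (\<exists>x. poly p x = 0))"

definition bilinear_prod :: "('k::field \<Rightarrow> 'v::ab_group_add \<Rightarrow> 'v) \<Rightarrow> ('v \<Rightarrow> 'v \<Rightarrow> 'v) \<Rightarrow> bool" where
  "bilinear_prod scale m \<longleftrightarrow>
     (\<forall>x. Vector_Spaces.linear scale scale (m x)) \<and> (\<forall>y. Vector_Spaces.linear scale scale (\<lambda>x. m x y))"

definition bilinear_form :: "('k::field \<Rightarrow> 'v::ab_group_add \<Rightarrow> 'v) \<Rightarrow> ('v \<Rightarrow> 'v \<Rightarrow> 'k) \<Rightarrow> bool" where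
  "bilinear_form scale f \<longleftrightarrow>
     (\<forall>x. Vector_Spaces.linear scale (*) (f x)) \<and> (\<forall>y. Vector_Spaces.linear scale (*) (\<lambda>x. f x y))"

definition nondegenerate :: "('v::ab_group_add \<Rightarrow> 'v \<Rightarrow> 'k::field) \<Rightarrow> bool" where
  "nondegenerate f \<longleftrightarrow> (\<forall>x. (\<forall>y. f x y = 0) \<longrightarrow> x = 0)"

definition jordan_algebra :: "('k::field \<Rightarrow> 'v::ab_group_add \<Rightarrow> 'v) \<Rightarrow> ('v \<Rightarrow> 'v \<Rightarrow> 'v) \<Rightarrow> bool" where
  "jordan_algebra scale m \<longleftrightarrow> bilinear_prod scale m \<and> (\<forall>x y. m x y = m y x) \<and>
     (\<forall>x y. m x (m y (m x x)) = m (m x y) (m x x))"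

definition pseudo_euclidean ::
  "('k::field \<Rightarrow> 'v::ab_group_add \<Rightarrow> 'v) \<Rightarrow> ('v \<Rightarrow> 'v \<Rightarrow> 'v) \<Rightarrow> ('v \<Rightarrow> 'v \<Rightarrow> 'k) \<Rightarrow> bool" where
  "pseudo_euclidean scale m B \<longleftrightarrow> bilinear_form scale B \<and> (\<forall>x y. B x y = B y x) \<and>
     nondegenerate B \<and> (\<forall>x y z. B (m x y) z = B x (m y z))"

definition symplectic_form ::
  "('k::field \<Rightarrow> 'v::ab_group_add \<Rightarrow> 'v) \<Rightarrow> ('v \<Rightarrow> 'v \<Rightarrow> 'v) \<Rightarrow> ('v \<Rightarrow> 'v \<Rightarrow> 'k) \<Rightarrow> bool" where
  "symplectic_form scale m \<omega> \<longleftrightarrow> bilinear_form scale \<omega> \<and> (\<forall>x y. \<omega> x y = - \<omega> y x) \<and>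
     nondegenerate \<omega> \<and> (\<forall>x y z. \<omega> (m x y) z + \<omega> (m y z) x + \<omega> (m z x) y = 0)"

definition subalgebra :: "('k::field \<Rightarrow> 'v::ab_group_add \<Rightarrow> 'v) \<Rightarrow> ('v \<Rightarrow> 'v \<Rightarrow> 'v) \<Rightarrow> 'v set \<Rightarrow> bool" where
  "subalgebra scale m U \<longleftrightarrow> module.subspace scale U \<and> (\<forall>x\<in>U. \<forall>y\<in>U. m x y \<in> U)"

definition totally_isotropic :: "('v \<Rightarrow> 'v \<Rightarrow> 'k::zero) \<Rightarrow> 'v set \<Rightarrow> bool" where
  "totally_isotropic f U \<longleftrightarrow> (\<forall>x\<in>U. \<forall>y\<in>U. f x y = 0)"

definition direct_sum :: "'v::ab_group_add set \<Rightarrow> 'v set \<Rightarrow> bool" where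
  "direct_sum U V \<longleftrightarrow> U \<inter> V = {0} \<and> (\<forall>x. \<exists>u\<in>U. \<exists>v\<in>V. x = u + v)"

definition jordan_manin ::
  "('k::field \<Rightarrow> 'v::ab_group_add \<Rightarrow> 'v) \<Rightarrow> ('v \<Rightarrow> 'v \<Rightarrow> 'v) \<Rightarrow> ('v \<Rightarrow> 'v \<Rightarrow> 'k) \<Rightarrow> 'v set \<Rightarrow> 'v set \<Rightarrow> bool" where
  "jordan_manin scale m B U V \<longleftrightarrow> jordan_algebra scale m \<and> pseudo_euclidean scale m B \<and>
     subalgebra scale m U \<and> subalgebra scale m V \<and> direct_sum U V \<and>
     totally_isotropic B U \<and> totally_isotropic B V"

definition symplectic_jordan_manin ::
  "('k::field \<Rightarrow> 'v::ab_group_add \<Rightarrow> 'v) \<Rightarrow> ('v \<Rightarrow> 'v \<Rightarrow> 'v) \<Rightarrow> ('v \<Rightarrow> 'v \<Rightarrow> 'k) \<Rightarrow> ('v \<Rightarrow> 'v \<Rightarrow> 'k)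
     \<Rightarrow> 'v set \<Rightarrow> 'v set \<Rightarrow> bool" where
  "symplectic_jordan_manin scale m B \<omega> U V \<longleftrightarrow> jordan_manin scale m B U V \<and>
     symplectic_form scale m \<omega> \<and> totally_isotropic \<omega> U \<and> totally_isotropic \<omega> V"

end

theory Submission
  imports Defs
begin

text \<open>Nondegeneracy of \<open>B\<close> writes \<open>\<omega>(x, y) = B(D x, y)\<close> for an invertible operator \<open>D\<close>;
  the cyclic condition on \<open>\<omega>\<close> makes \<open>D\<close> a derivation and skew-symmetry makes it skew-adjoint
  for \<open>B\<close>. Over an algebraically closed field the algebra is spanned by the generalized
  eigenspaces \<open>J\<^sub>\<lambda>\<close> of \<open>D\<close>, with \<open>J\<^sub>\<lambda> J\<^sub>\<mu> \<subseteq> J\<^bsub>\<lambda>+\<mu>\<^esub>\<close> and \<open>B\<close>, \<open>\<omega>\<close> vanishing on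
  \<open>J\<^sub>\<lambda> \<times> J\<^sub>\<mu>\<close> unless \<open>\<lambda> + \<mu> = 0\<close>; moreover \<open>J\<^sub>0 = 0\<close> since \<open>D\<close> is invertible. In
  characteristic zero the nonzero eigenvalues can be split by a positive cone \<open>P\<close>
  (additively closed, \<open>0 \<notin> P\<close>): the eigenspaces with \<open>\<lambda> \<in> P\<close> and those with \<open>-\<lambda> \<in> P\<close> span
  two subalgebras that are isotropic for both forms and together span the algebra, and
  nondegeneracy of \<open>B\<close> makes the sum direct.\<close>

section \<open>Linear factors of polynomials\<close>

lemma linear_power_bezout:
  fixes f :: "'k::field poly"
  assumes "poly f u \<noteq> 0"
  shows "\<exists>a b. a * [:-u, 1:] ^ n + b * f = 1"
proof -
  define c where "c = poly f u"
  have c: "c \<noteq> 0" using assms by (simp add: c_def)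
  obtain g where g: "f - [:c:] = [:-u, 1:] * g"
    using poly_eq_0_iff_dvd[of "f - [:c:]" u] by (auto simp: c_def elim: dvdE)
  define h where "h = 1 - smult (1 / c) f"
  have "f = [:c:] + [:-u, 1:] * g"
    using g by (metis add.commute diff_add_cancel)
  then have "smult (1 / c) f = smult (1 / c) ([:c:] + [:-u, 1:] * g)"
    by (rule arg_cong)
  also have "\<dots> = 1 + smult (1 / c) ([:-u, 1:] * g)"
    using c by (simp add: smult_add_right one_pCons)
  finally have "h = [:-u, 1:] * (- smult (1 / c) g)"
    by (simp add: h_def)
  then have "h ^ n = (- smult (1 / c) g) ^ n * [:-u, 1:] ^ n"
    by (simp only: power_mult_distrib mult.commute)
  moreover have "1 - h ^ n = (smult (1 / c) (\<Sum>i<n. h ^ i)) * f"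
    unfolding one_diff_power_eq by (simp add: h_def mult.commute)
  ultimately show ?thesis
    by (metis add_diff_cancel_left' diff_add_cancel)
qed

lemma alg_closed_dvd_prod_linear_powers:
  fixes p :: "'k::field poly"
  assumes alg: "alg_closed TYPE('k)" and "p \<noteq> 0"
  shows "\<exists>S K. finite S \<and> p dvd (\<Prod>c\<in>S. [:-c, 1:] ^ K)"
  using assms(2)
proof (induction "degree p" arbitrary: p)
  case 0
  then have "is_unit p" by (simp add: is_unit_iff_degree)
  then show ?case by (intro exI[of _ "{}"]) auto
next
  case (Suc n)
  then obtain c where "poly p c = 0" using alg unfolding alg_closed_def by force
  then obtain q where p: "p = [:-c, 1:] * q" by (auto simp: poly_eq_0_iff_dvd elim: dvdE)
  from Suc.prems p have "q \<noteq> 0" by auto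
  then have "degree p = Suc (degree q)"
    unfolding p by (subst degree_mult_eq) auto
  with Suc.hyps(2) have "degree q = n" by simp
  with Suc.hyps(1) \<open>q \<noteq> 0\<close> obtain S K where S: "finite S" "q dvd (\<Prod>c\<in>S. [:-c, 1:] ^ K)" by metis
  define F where "F = (\<Prod>c\<in>insert c S. [:-c, 1:] ^ Suc K)"
  have "[:-c, 1:] dvd [:-c, 1:] ^ Suc K" by (rule dvd_power) simp
  also have "\<dots> dvd F" unfolding F_def using S(1) by (intro dvd_prodI) auto
  finally have "[:-c, 1:] dvd F" .
  moreover have "q dvd F"
  proof (rule dvd_trans[OF S(2)])
    have "(\<Prod>c\<in>S. [:-c, 1:] ^ K) dvd (\<Prod>c\<in>S. [:-c, 1:] ^ Suc K)"
      by (intro prod_dvd_prod le_imp_power_dvd) simp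
    also have "\<dots> dvd F"
      unfolding F_def using S(1) by (intro prod_dvd_prod_subset) auto
    finally show "(\<Prod>c\<in>S. [:-c, 1:] ^ K) dvd F" .
  qed
  ultimately have "p dvd F * F" unfolding p by (rule mult_dvd_mono)
  also have "F * F = (\<Prod>c\<in>insert c S. [:-c, 1:] ^ (Suc K + Suc K))"
    by (simp only: F_def prod.distrib[symmetric] power_add)
  finally show ?case using S(1) by blast
qed

section \<open>Positive cones in characteristic zero\<close>

text \<open>The last condition is what allows \<open>s\<close> to be adjoined to \<open>P\<close> whenever \<open>-s \<notin> P\<close>.\<close>

definition positive_cone :: "'a::semiring_1 set \<Rightarrow> bool" where
  "positive_cone P \<longleftrightarrow> (\<forall>a\<in>P. \<forall>b\<in>P. a + b \<in> P) \<and> 0 \<notin> P \<and>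
     (\<forall>n x. 0 < n \<longrightarrow> of_nat n * x \<in> P \<longrightarrow> x \<in> P)"

lemma positive_cone_add: "positive_cone P \<Longrightarrow> a \<in> P \<Longrightarrow> b \<in> P \<Longrightarrow> a + b \<in> P"
  and positive_cone_zero: "positive_cone P \<Longrightarrow> 0 \<notin> P"
  by (simp_all add: positive_cone_def)

lemma add_closed_of_nat_mult:
  fixes P :: "'a::semiring_1 set"
  assumes "\<forall>a\<in>P. \<forall>b\<in>P. a + b \<in> P" "x \<in> P" "0 < k"
  shows "of_nat k * x \<in> P"
  using assms(3)
proof (induction k rule: nat_induct_non_zero)
  case (Suc k)
  have "of_nat (Suc k) * x = of_nat k * x + x"
    by (simp add: distrib_right add.commute)
  with Suc.IH assms(1,2) show ?case by simp
qed (simp add: assms(2))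

lemma positive_cone_uminus:
  fixes P :: "'a::ring_1 set"
  assumes "positive_cone P"
  shows "positive_cone (uminus ` P)"
  unfolding positive_cone_def
proof (intro conjI ballI allI impI)
  fix a b assume "a \<in> uminus ` P" "b \<in> uminus ` P"
  then have "- a + - b \<in> P"
    using positive_cone_add[OF assms] by auto
  then show "a + b \<in> uminus ` P"
    by (metis add.commute image_eqI minus_add_distrib minus_minus)
next
  show "0 \<notin> uminus ` P"
    using positive_cone_zero[OF assms] by auto
next
  fix n x assume "0 < n" "of_nat n * x \<in> uminus ` P"
  then have "of_nat n * - x \<in> P" by auto
  with \<open>0 < n\<close> assms have "- x \<in> P" unfolding positive_cone_def by blast
  then show "x \<in> uminus ` P" by (metis image_eqI minus_minus)
qed

lemma positive_cone_saturation:
  fixes Q :: "'a::comm_semiring_1 set"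
  assumes add: "\<forall>a\<in>Q. \<forall>b\<in>Q. a + b \<in> Q" and "0 \<notin> Q"
  shows "positive_cone {x. \<exists>k>0. of_nat k * x \<in> Q}"
  unfolding positive_cone_def
proof (intro conjI ballI allI impI)
  fix a b assume "a \<in> {x. \<exists>k>0. of_nat k * x \<in> Q}" "b \<in> {x. \<exists>k>0. of_nat k * x \<in> Q}"
  then obtain k l where kl: "0 < k" "of_nat k * a \<in> Q" "0 < l" "of_nat l * b \<in> Q" by blast
  have "of_nat l * (of_nat k * a) + of_nat k * (of_nat l * b) \<in> Q"
    using add add_closed_of_nat_mult[OF add kl(2) kl(3)] add_closed_of_nat_mult[OF add kl(4) kl(1)]
    by blast
  moreover have "of_nat l * (of_nat k * a) + of_nat k * (of_nat l * b) = of_nat (k * l) * (a + b)"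
    by (simp add: algebra_simps)
  ultimately have "of_nat (k * l) * (a + b) \<in> Q" by simp
  with kl show "a + b \<in> {x. \<exists>k>0. of_nat k * x \<in> Q}" by (intro CollectI exI[of _ "k * l"]) simp
next
  fix n x assume "0 < n" "of_nat n * x \<in> {x. \<exists>k>0. of_nat k * x \<in> Q}"
  then obtain k where "0 < k" "of_nat k * (of_nat n * x) \<in> Q" by blast
  then have "of_nat (k * n) * x \<in> Q" by (simp add: mult.assoc)
  with \<open>0 < k\<close> \<open>0 < n\<close> show "x \<in> {x. \<exists>k>0. of_nat k * x \<in> Q}"
    by (intro CollectI exI[of _ "k * n"]) simp
qed (use \<open>0 \<notin> Q\<close> in simp)

lemma positive_cone_extend:
  fixes P :: "'a::{idom, ring_char_0} set"
  assumes P: "positive_cone P" and "s \<noteq> 0" "- s \<notin> P"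
  shows "\<exists>P'. positive_cone P' \<and> P \<subseteq> P' \<and> s \<in> P'"
proof -
  define Q where "Q = {p + of_nat n * s | p n. (p \<in> P \<or> p = 0) \<and> (p \<in> P \<or> 0 < n)}"
  have add: "\<forall>a\<in>Q. \<forall>b\<in>Q. a + b \<in> Q"
  proof (intro ballI)
    fix a b assume "a \<in> Q" "b \<in> Q"
    then obtain p n q k where a: "a = p + of_nat n * s" "p \<in> P \<or> p = 0" "p \<in> P \<or> 0 < n"
      and b: "b = q + of_nat k * s" "q \<in> P \<or> q = 0" "q \<in> P \<or> 0 < k"
      unfolding Q_def by blast
    have "a + b = (p + q) + of_nat (n + k) * s"
      using a(1) b(1) by (simp add: algebra_simps)
    moreover have "(p + q \<in> P \<or> p + q = 0) \<and> (p + q \<in> P \<or> 0 < n + k)"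
      using a(2,3) b(2,3) positive_cone_add[OF P] by auto
    ultimately show "a + b \<in> Q" unfolding Q_def by blast
  qed
  have "0 \<notin> Q"
  proof
    assume "0 \<in> Q"
    then obtain p n where pn: "0 = p + of_nat n * s" "p \<in> P \<or> p = 0" "p \<in> P \<or> 0 < n"
      unfolding Q_def by blast
    then have p: "p = of_nat n * - s" by (simp add: eq_neg_iff_add_eq_0)
    show False
    proof (cases "p = 0")
      case True
      with p pn(3) \<open>s \<noteq> 0\<close> P show False by (simp add: positive_cone_def)
    next
      case False
      with p pn(2) have "0 < n" "of_nat n * - s \<in> P" by auto
      with P \<open>- s \<notin> P\<close> show False unfolding positive_cone_def by blast
    qed
  qed
  have "x + of_nat 0 * s \<in> Q" if "x \<in> P" for x
    unfolding Q_def using that by blast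
  then have "P \<subseteq> {x. \<exists>k>0. of_nat k * x \<in> Q}"
    by (intro subsetI CollectI exI[of _ 1]) simp
  moreover have "0 + of_nat 1 * s \<in> Q"
    unfolding Q_def by force
  then have "s \<in> {x. \<exists>k>0. of_nat k * x \<in> Q}"
    by (intro CollectI exI[of _ 1]) simp
  ultimately show ?thesis using positive_cone_saturation[OF add \<open>0 \<notin> Q\<close>] by blast
qed

lemma positive_cone_exists:
  fixes S :: "'a::{idom, ring_char_0} set"
  assumes "finite S" "0 \<notin> S"
  shows "\<exists>P. positive_cone P \<and> (\<forall>s\<in>S. s \<in> P \<or> - s \<in> P)"
  using assms
proof (induction S rule: finite_induct)
  case empty
  have "positive_cone {}" by (simp add: positive_cone_def)
  then show ?case by blast
next
  case (insert s S)
  then obtain P where P: "positive_cone P" "\<forall>t\<in>S. t \<in> P \<or> - t \<in> P" by auto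
  show ?case
  proof (cases "- s \<in> P")
    case True
    with P show ?thesis by auto
  next
    case False
    with insert.prems P(1) obtain P' where "positive_cone P'" "P \<subseteq> P'" "s \<in> P'"
      using positive_cone_extend by (metis insertI1)
    with P(2) show ?thesis by blast
  qed
qed

section \<open>Bilinear maps and forms\<close>

lemma bilinear_prodD:
  assumes "bilinear_prod scale m"
  shows "module_hom scale scale (\<lambda>x. m x y)" "module_hom scale scale (m x)"
  using assms unfolding bilinear_prod_def by (simp_all add: module_hom_iff_linear)

lemma bilinear_formD:
  assumes "bilinear_form scale f"
  shows "module_hom scale (*) (\<lambda>x. f x y)" "module_hom scale (*) (f x)"
  using assms unfolding bilinear_form_def by (simp_all add: module_hom_iff_linear)

context vector_space
begin

lemma subalgebra_span:
  assumes m: "bilinear_prod scale m" and X: "\<And>a b. a \<in> X \<Longrightarrow> b \<in> X \<Longrightarrow> m a b \<in> span X"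
  shows "subalgebra scale m (span X)"
  unfolding subalgebra_def
proof (intro conjI ballI)
  fix x y assume "x \<in> span X" "y \<in> span X"
  have "span X \<subseteq> m a -` span X" if "a \<in> X" for a
    using X that by (intro span_minimal module_hom.subspace_vimage[OF bilinear_prodD(2)[OF m]]) auto
  then have "X \<subseteq> (\<lambda>a. m a y) -` span X"
    using \<open>y \<in> span X\<close> by blast
  then have "span X \<subseteq> (\<lambda>a. m a y) -` span X"
    by (intro span_minimal module_hom.subspace_vimage[OF bilinear_prodD(1)[OF m]]) auto
  with \<open>x \<in> span X\<close> show "m x y \<in> span X" by blast
qed simp

lemma totally_isotropic_span:
  assumes f: "bilinear_form scale f" and X: "totally_isotropic f X"
  shows "totally_isotropic f (span X)"
  unfolding totally_isotropic_def
proof (intro ballI)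
  fix x y assume "x \<in> span X" "y \<in> span X"
  have "span X \<subseteq> {y. f a y = 0}" if "a \<in> X" for a
    using X that unfolding totally_isotropic_def
    by (intro span_minimal module_hom.subspace_kernel[OF bilinear_formD(2)[OF f]]) auto
  then have "X \<subseteq> {a. f a y = 0}"
    using \<open>y \<in> span X\<close> by blast
  then have "span X \<subseteq> {a. f a y = 0}"
    by (intro span_minimal module_hom.subspace_kernel[OF bilinear_formD(1)[OF f]])
  with \<open>x \<in> span X\<close> show "f x y = 0" by blast
qed

lemma direct_sum_totally_isotropic:
  assumes f: "bilinear_form scale f" "nondegenerate f"
    and U: "subspace U" "totally_isotropic f U" and V: "subspace V" "totally_isotropic f V"
    and sum: "\<And>x. \<exists>u\<in>U. \<exists>v\<in>V. x = u + v"
  shows "direct_sum U V"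
  unfolding direct_sum_def
proof (intro conjI allI sum equalityI subsetI)
  fix x assume x: "x \<in> U \<inter> V"
  have "f x z = 0" for z
  proof -
    obtain u v where "u \<in> U" "v \<in> V" "z = u + v" using sum by blast
    with x U(2) V(2) show ?thesis
      by (simp add: module_hom.add[OF bilinear_formD(2)[OF f(1)]] totally_isotropic_def)
  qed
  with f(2) show "x \<in> {0}" unfolding nondegenerate_def by blast
qed (use U(1) V(1) subspace_0 in auto)

end

context finite_dimensional_vector_space
begin

lemma linear_form_eq_on_Basis:
  assumes "module_hom scale (*) g" "module_hom scale (*) h" "\<And>b. b \<in> Basis \<Longrightarrow> g b = h b"
  shows "g x = h x"
proof -
  have "subspace {x. g x = h x}"
    using assms(1,2) by (simp add: subspace_def module_hom.zero module_hom.add module_hom.scale)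
  with assms(3) have "span Basis \<subseteq> {x. g x = h x}"
    by (intro span_minimal) auto
  then show ?thesis using span_Basis by blast
qed

lemma nondegenerate_form_coordinates_surj:
  assumes f: "bilinear_form scale f" "nondegenerate f"
  shows "surj (\<lambda>x. \<Sum>b\<in>Basis. f x b *s b)" (is "surj ?L")
proof -
  have L: "Vector_Spaces.linear scale scale ?L"
    using module_hom.add[OF bilinear_formD(1)[OF f(1)]] module_hom.scale[OF bilinear_formD(1)[OF f(1)]]
    unfolding Vector_Spaces.linear_iff
    by (simp add: vector_space_axioms scale_left_distrib sum.distrib scale_sum_right)
  have "x = 0" if "?L x = 0" for x
  proof -
    have "f x b = 0" if "b \<in> Basis" for b
      using independent_Basis \<open>?L x = 0\<close> that unfolding independent_explicit by blast
    then have "f x z = 0" for z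
      using module_hom.eq_0_on_span[OF bilinear_formD(2)[OF f(1)]] span_Basis by blast
    with f(2) show "x = 0" unfolding nondegenerate_def by blast
  qed
  then have "inj ?L"
    using module_hom.inj_iff_eq_0[of scale scale ?L] L by (simp add: module_hom_iff_linear)
  with L show ?thesis
    by (rule linear_inj_imp_surj)
qed

lemma nondegenerate_form_represents:
  assumes f: "bilinear_form scale f" "nondegenerate f" and g: "module_hom scale (*) g"
  shows "\<exists>y. \<forall>z. f y z = g z"
proof -
  from surjD[OF nondegenerate_form_coordinates_surj[OF f], of "\<Sum>b\<in>Basis. g b *s b"]
  obtain y where y: "(\<Sum>b\<in>Basis. g b *s b) = (\<Sum>b\<in>Basis. f y b *s b)"
    by blast
  have "f y b = g b" if "b \<in> Basis" for b
  proof -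
    have "(\<Sum>b\<in>Basis. (f y b - g b) *s b) = 0"
      using y by (simp add: scale_left_diff_distrib sum_subtractf)
    with independent_Basis that have "f y b - g b = 0"
      unfolding independent_explicit by (elim conjE allE[of _ "\<lambda>b. f y b - g b"]) blast
    then show ?thesis by simp
  qed
  then have "f y z = g z" for z
    by (rule linear_form_eq_on_Basis[OF bilinear_formD(2)[OF f(1)] g])
  then show ?thesis by blast
qed

end

section \<open>Generalized eigenspaces of an endomorphism\<close>

locale linear_endomorphism = finite_dimensional_vector_space scale Basis
  for scale :: "'k::field \<Rightarrow> 'v::ab_group_add \<Rightarrow> 'v" (infixr \<open>*s\<close> 75)
    and Basis :: "'v set" +
  fixes D :: "'v \<Rightarrow> 'v"
  assumes linear_D: "Vector_Spaces.linear scale scale D"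
begin

sublocale D: module_hom scale scale D
  using linear_D by (simp add: module_hom_iff_linear)

definition shift :: "'k \<Rightarrow> 'v \<Rightarrow> 'v" where
  "shift c x = D x - c *s x"

definition gen_eigenspace :: "'k \<Rightarrow> 'v set" where
  "gen_eigenspace c = {x. \<exists>n. (shift c ^^ n) x = 0}"

text \<open>\<open>poly_op p x\<close> is \<open>p(D) x\<close>, evaluated by Horner's scheme.\<close>

definition poly_op :: "'k poly \<Rightarrow> 'v \<Rightarrow> 'v" where
  "poly_op p = fold_coeffs (\<lambda>a f x. a *s x + D (f x)) p (\<lambda>x. 0)"

lemma poly_op_0 [simp]: "poly_op 0 x = 0"
  by (simp add: poly_op_def)

lemma poly_op_pCons [simp]: "poly_op (pCons a p) x = a *s x + D (poly_op p x)"
  by (cases "p = 0 \<and> a = 0") (auto simp: poly_op_def)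

lemma module_hom_poly_op: "module_hom scale scale (poly_op p)"
  by (induction p) (simp_all add: module_hom_iff D.add D.scale scale_right_distrib
      ac_simps module_axioms)

lemma poly_op_0_right [simp]: "poly_op p 0 = 0"
  by (rule module_hom.zero[OF module_hom_poly_op])

lemma poly_op_add: "poly_op (p + q) x = poly_op p x + poly_op q x"
proof (induction p arbitrary: q)
  case (pCons a p)
  then show ?case by (cases q) (simp_all add: D.add scale_left_distrib ac_simps)
qed simp

lemma poly_op_smult: "poly_op (smult c p) x = c *s poly_op p x"
  by (induction p) (simp_all add: D.add D.scale scale_right_distrib)

lemma poly_op_D: "poly_op p (D x) = D (poly_op p x)"
  by (induction p) (simp_all add: D.add D.scale)

lemma poly_op_mult: "poly_op (p * q) x = poly_op p (poly_op q x)"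
  by (induction p) (simp_all add: poly_op_add poly_op_smult poly_op_D)

lemma poly_op_1 [simp]: "poly_op 1 x = x"
  by (simp add: one_pCons)

lemma poly_op_monom: "poly_op (monom a n) x = a *s (D ^^ n) x"
  by (induction n) (simp_all add: monom_0 monom_Suc D.scale funpow_swap1)

lemma poly_op_sum: "poly_op (\<Sum>i\<in>I. p i) x = (\<Sum>i\<in>I. poly_op (p i) x)"
  by (induction I rule: infinite_finite_induct) (simp_all add: poly_op_add)

lemma poly_op_linear_power: "poly_op ([:-c, 1:] ^ n) x = (shift c ^^ n) x"
proof (induction n arbitrary: x)
  case (Suc n)
  have "poly_op [:-c, 1:] x = shift c x"
    by (simp add: shift_def)
  then show ?case
    by (simp only: power_Suc2 poly_op_mult Suc.IH funpow_Suc_right o_apply)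
qed simp

lemma poly_op_annihilates_vector: "\<exists>p. p \<noteq> 0 \<and> poly_op p x = 0"
proof -
  define n where "n = card Basis"
  define f where "f i = (D ^^ i) x" for i
  show ?thesis
  proof (cases "inj_on f {..n}")
    case False
    then obtain i j where ij: "i \<le> n" "j \<le> n" "i \<noteq> j" "f i = f j"
      unfolding inj_on_def by auto
    define p where "p = monom (1::'k) i - monom 1 j"
    have "coeff p i = 1" using ij by (simp add: p_def)
    moreover have "poly_op p x = 0"
      using ij poly_op_add[of p "monom 1 j"] by (simp add: p_def poly_op_monom f_def)
    ultimately show ?thesis by (metis one_neq_zero coeff_0)
  next
    case True
    have "card (f ` {..n}) = Suc n" using True by (simp add: card_image)
    then have "dependent (f ` {..n})"
      using independent_span_bound[OF finite_Basis, of "f ` {..n}"] by (auto simp: span_Basis n_def)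
    then obtain u where u: "\<exists>v\<in>f ` {..n}. u v \<noteq> 0" "(\<Sum>v\<in>f ` {..n}. u v *s v) = 0"
      using dependent_finite by blast
    define p where "p = (\<Sum>i\<le>n. monom (u (f i)) i)"
    from u(1) obtain i where "i \<le> n" "u (f i) \<noteq> 0" by auto
    then have "coeff p i \<noteq> 0" by (simp add: p_def coeff_sum)
    moreover have "poly_op p x = (\<Sum>i\<le>n. u (f i) *s f i)"
      by (simp add: p_def poly_op_sum poly_op_monom f_def)
    moreover have "\<dots> = (\<Sum>v\<in>f ` {..n}. u v *s v)"
      by (simp add: sum.reindex[OF True])
    ultimately show ?thesis using u(2) by (metis coeff_0)
  qed
qed

lemma poly_op_annihilator: "\<exists>q. q \<noteq> 0 \<and> (\<forall>x. poly_op q x = 0)"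
proof -
  obtain p where p: "\<And>b. p b \<noteq> 0 \<and> poly_op (p b) b = 0"
    using poly_op_annihilates_vector by metis
  define q where "q = (\<Prod>b\<in>Basis. p b)"
  have "poly_op q b = 0" if "b \<in> Basis" for b
  proof -
    have "q = (\<Prod>c\<in>Basis - {b}. p c) * p b"
      using that finite_Basis unfolding q_def by (metis mult.commute prod.remove)
    then show ?thesis using p by (simp add: poly_op_mult)
  qed
  then have "poly_op q x = 0" for x
    using module_hom.eq_0_on_span[OF module_hom_poly_op] span_Basis by blast
  moreover have "q \<noteq> 0" using p finite_Basis by (simp add: q_def)
  ultimately show ?thesis by blast
qed

lemma annihilated_in_span_gen_eigenspaces:
  assumes "finite S" "poly_op (\<Prod>c\<in>S. [:-c, 1:] ^ K) x = 0"
  shows "x \<in> span (\<Union>c\<in>S. gen_eigenspace c)"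
  using assms
proof (induction S arbitrary: x rule: finite_induct)
  case (insert c S)
  define h where "h = (\<Prod>c\<in>S. [:-c, 1:] ^ K)"
  have "poly h c \<noteq> 0"
    using insert.hyps by (auto simp: h_def poly_prod)
  then obtain a b where ab: "a * [:-c, 1:] ^ K + b * h = 1"
    using linear_power_bezout by blast
  have x: "x = poly_op (a * [:-c, 1:] ^ K) x + poly_op (b * h) x"
    by (metis ab poly_op_1 poly_op_add)
  have prod: "(\<Prod>c\<in>insert c S. [:-c, 1:] ^ K) = [:-c, 1:] ^ K * h"
    using insert.hyps by (simp add: h_def)
  have annihilated: "poly_op ([:-c, 1:] ^ K * h) x = 0"
    using insert.prems by (simp only: prod)
  have "poly_op h (poly_op (a * [:-c, 1:] ^ K) x) = poly_op a (poly_op ([:-c, 1:] ^ K * h) x)"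
    by (simp only: poly_op_mult[symmetric] ac_simps)
  then have "poly_op h (poly_op (a * [:-c, 1:] ^ K) x) = 0"
    by (simp add: annihilated)
  then have "poly_op (a * [:-c, 1:] ^ K) x \<in> span (\<Union>c\<in>S. gen_eigenspace c)"
    unfolding h_def by (rule insert.IH)
  then have "poly_op (a * [:-c, 1:] ^ K) x \<in> span (\<Union>c\<in>insert c S. gen_eigenspace c)"
    by (rule rev_subsetD[OF _ span_mono]) auto
  moreover have "(shift c ^^ K) (poly_op (b * h) x) = poly_op b (poly_op ([:-c, 1:] ^ K * h) x)"
    by (simp only: poly_op_linear_power[symmetric] poly_op_mult[symmetric] ac_simps)
  then have "(shift c ^^ K) (poly_op (b * h) x) = 0"
    by (simp add: annihilated)
  then have "poly_op (b * h) x \<in> span (\<Union>c\<in>insert c S. gen_eigenspace c)"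
    unfolding gen_eigenspace_def by (intro span_base) blast
  ultimately show ?case
    using x by (metis span_add)
qed (simp add: span_zero)

lemma span_gen_eigenspaces:
  assumes "alg_closed TYPE('k)"
  shows "\<exists>S. finite S \<and> span (\<Union>c\<in>S. gen_eigenspace c) = UNIV"
proof -
  obtain q where q: "q \<noteq> 0" "\<And>x. poly_op q x = 0"
    using poly_op_annihilator by blast
  obtain S K r where "finite S" "(\<Prod>c\<in>S. [:-c, 1:] ^ K) = r * q"
    using alg_closed_dvd_prod_linear_powers[OF assms q(1)] by (metis dvdE mult.commute)
  then have "x \<in> span (\<Union>c\<in>S. gen_eigenspace c)" for x
    using q(2) by (intro annihilated_in_span_gen_eigenspaces[where K = K]) (simp_all add: poly_op_mult)
  with \<open>finite S\<close> show ?thesis by blast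
qed

lemma shift_power_zero [simp]: "(shift c ^^ n) 0 = 0"
  by (metis poly_op_0_right poly_op_linear_power)

lemma shift_power_add: "(shift c ^^ n) (x + y) = (shift c ^^ n) x + (shift c ^^ n) y"
  by (simp only: poly_op_linear_power[symmetric] module_hom.add[OF module_hom_poly_op])

lemma gen_eigenspace_D:
  assumes "x \<in> gen_eigenspace c"
  shows "D x \<in> gen_eigenspace c"
proof -
  obtain n where "(shift c ^^ n) x = 0"
    using assms by (auto simp: gen_eigenspace_def)
  moreover have "(shift c ^^ n) (D x) = D ((shift c ^^ n) x)"
    by (simp only: poly_op_linear_power[symmetric] poly_op_D)
  ultimately show ?thesis by (auto simp: gen_eigenspace_def)
qed

lemma gen_eigenspace_0:
  assumes "inj D" "x \<in> gen_eigenspace 0"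
  shows "x = 0"
proof -
  have "shift 0 = D" by (simp add: fun_eq_iff shift_def)
  then obtain n where "(D ^^ n) x = 0"
    using assms(2) by (auto simp: gen_eigenspace_def)
  moreover have "inj (D ^^ n)"
    using assms(1) by (rule inj_fn)
  moreover have "(D ^^ n) 0 = 0"
    by (induction n) simp_all
  ultimately show ?thesis
    by (metis injD)
qed

end

section \<open>Symplectic pseudo-euclidean algebras\<close>

locale symplectic_pseudo_euclidean_algebra = finite_dimensional_vector_space scale Basis
  for scale :: "'k::field_char_0 \<Rightarrow> 'v::ab_group_add \<Rightarrow> 'v" (infixr \<open>*s\<close> 75)
    and Basis :: "'v set" +
  fixes m :: "'v \<Rightarrow> 'v \<Rightarrow> 'v" and B \<omega> :: "'v \<Rightarrow> 'v \<Rightarrow> 'k"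
  assumes bilinear_m: "bilinear_prod scale m"
    and m_commute: "m x y = m y x"
    and pseudo_euclidean: "pseudo_euclidean scale m B"
    and symplectic: "symplectic_form scale m \<omega>"
begin

lemma bilinear_B: "bilinear_form scale B"
  and B_commute: "B x y = B y x"
  and nondegenerate_B: "nondegenerate B"
  and B_assoc: "B (m x y) z = B x (m y z)"
  using pseudo_euclidean unfolding pseudo_euclidean_def by blast+

lemma bilinear_\<omega>: "bilinear_form scale \<omega>"
  and \<omega>_skew: "\<omega> x y = - \<omega> y x"
  and nondegenerate_\<omega>: "nondegenerate \<omega>"
  and \<omega>_cyclic: "\<omega> (m x y) z + \<omega> (m y z) x + \<omega> (m z x) y = 0"
  using symplectic unfolding symplectic_form_def by blast+

lemmas m_linear =
  module_hom.add[OF bilinear_prodD(1)[OF bilinear_m]] module_hom.add[OF bilinear_prodD(2)[OF bilinear_m]]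
  module_hom.scale[OF bilinear_prodD(1)[OF bilinear_m]] module_hom.scale[OF bilinear_prodD(2)[OF bilinear_m]]
  module_hom.diff[OF bilinear_prodD(1)[OF bilinear_m]] module_hom.diff[OF bilinear_prodD(2)[OF bilinear_m]]
  module_hom.zero[OF bilinear_prodD(1)[OF bilinear_m]] module_hom.zero[OF bilinear_prodD(2)[OF bilinear_m]]

lemmas B_linear =
  module_hom.add[OF bilinear_formD(1)[OF bilinear_B]] module_hom.add[OF bilinear_formD(2)[OF bilinear_B]]
  module_hom.scale[OF bilinear_formD(1)[OF bilinear_B]] module_hom.scale[OF bilinear_formD(2)[OF bilinear_B]]
  module_hom.diff[OF bilinear_formD(1)[OF bilinear_B]] module_hom.diff[OF bilinear_formD(2)[OF bilinear_B]]
  module_hom.zero[OF bilinear_formD(1)[OF bilinear_B]] module_hom.zero[OF bilinear_formD(2)[OF bilinear_B]]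

lemmas \<omega>_linear =
  module_hom.add[OF bilinear_formD(1)[OF bilinear_\<omega>]] module_hom.scale[OF bilinear_formD(1)[OF bilinear_\<omega>]]
  module_hom.diff[OF bilinear_formD(1)[OF bilinear_\<omega>]] module_hom.zero[OF bilinear_formD(1)[OF bilinear_\<omega>]]

lemma B_eqI:
  assumes "\<And>z. B x z = B y z"
  shows "x = y"
proof -
  have "B (x - y) z = 0" for z
    using assms by (simp add: B_linear)
  with nondegenerate_B show ?thesis
    unfolding nondegenerate_def by (metis eq_iff_diff_eq_0)
qed

definition D :: "'v \<Rightarrow> 'v" where
  "D x = (SOME y. \<forall>z. B y z = \<omega> x z)"

lemma B_D: "B (D x) z = \<omega> x z"
  using someI_ex[OF nondegenerate_form_represents[OF bilinear_B nondegenerate_B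
      bilinear_formD(2)[OF bilinear_\<omega>]]]
  unfolding D_def by blast

lemma linear_D: "Vector_Spaces.linear scale scale D"
  unfolding Vector_Spaces.linear_iff
  by (intro conjI allI vector_space_axioms B_eqI) (simp_all add: B_D B_linear \<omega>_linear)

lemma inj_D: "inj D"
proof (rule injI)
  fix x y assume "D x = D y"
  then have "\<omega> (x - y) z = 0" for z
    by (metis B_D \<omega>_linear right_minus_eq)
  with nondegenerate_\<omega> show "x = y"
    unfolding nondegenerate_def by (metis eq_iff_diff_eq_0)
qed

lemma B_D_skew: "B (D x) y = - B x (D y)"
proof -
  have "B (D x) y = - \<omega> y x" by (simp add: B_D \<omega>_skew[of x y])
  also have "\<dots> = - B x (D y)" by (simp add: B_D B_commute[of x])
  finally show ?thesis .
qed

lemma D_derivation: "D (m x y) = m (D x) y + m x (D y)"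
proof (rule B_eqI)
  fix z
  have "\<omega> (m y z) x = - B (D x) (m y z)"
    by (simp add: B_D \<omega>_skew[of "m y z"])
  also have "\<dots> = - B (m (D x) y) z"
    by (simp only: B_assoc)
  finally have yzx: "\<omega> (m y z) x = - B (m (D x) y) z" .
  have "\<omega> (m z x) y = - B (D y) (m x z)"
    by (simp add: B_D m_commute[of z x] \<omega>_skew[of "m x z"])
  also have "\<dots> = - B (m (D y) x) z"
    by (simp only: B_assoc)
  also have "\<dots> = - B (m x (D y)) z"
    by (simp only: m_commute[of "D y" x])
  finally have zxy: "\<omega> (m z x) y = - B (m x (D y)) z" .
  have "B (D (m x y)) z = B (m (D x) y) z + B (m x (D y)) z"
    using \<omega>_cyclic[of x y z] unfolding yzx zxy B_D by (simp add: algebra_simps)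
  then show "B (D (m x y)) z = B (m (D x) y + m x (D y)) z"
    by (simp add: B_linear)
qed

sublocale linear_endomorphism scale Basis D
  by (intro linear_endomorphism.intro linear_endomorphism_axioms.intro
      finite_dimensional_vector_space_axioms linear_D)

lemma shift_B: "B (shift a x) y + B x (shift b y) = - (a + b) * B x y"
  by (simp add: shift_def B_linear B_D_skew algebra_simps)

lemma shift_m: "shift (a + b) (m x y) = m (shift a x) y + m x (shift b y)"
  by (simp add: shift_def D_derivation m_linear scale_left_distrib algebra_simps)

lemma gen_eigenspace_orthogonal:
  assumes "x \<in> gen_eigenspace a" "y \<in> gen_eigenspace b" "a + b \<noteq> 0"
  shows "B x y = 0"
proof -
  have "B x y = 0" if "(shift a ^^ n) x = 0" "(shift b ^^ k) y = 0" for n k x y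
    using that
  proof (induction "n + k" arbitrary: n k x y rule: less_induct)
    case less
    show ?case
    proof (cases "n = 0 \<or> k = 0")
      case True
      with less.prems show ?thesis by (auto simp: B_linear)
    next
      case False
      then obtain n' k' where n: "n = Suc n'" and k: "k = Suc k'"
        by (metis not0_implies_Suc)
      have "B (shift a x) y = 0"
        using less.hyps[of n' k "shift a x" y] less.prems n by (simp add: funpow_Suc_right del: funpow.simps)
      moreover have "B x (shift b y) = 0"
        using less.hyps[of n k' x "shift b y"] less.prems k by (simp add: funpow_Suc_right del: funpow.simps)
      moreover have "- (a + b) \<noteq> 0" using assms(3) neg_equal_0_iff_equal by blast
      ultimately show ?thesis
        using shift_B[of a x y b] by simp
    qed
  qed
  with assms(1,2) show ?thesis by (auto simp: gen_eigenspace_def)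
qed

lemma gen_eigenspace_mult:
  assumes "x \<in> gen_eigenspace a" "y \<in> gen_eigenspace b"
  shows "m x y \<in> gen_eigenspace (a + b)"
proof -
  have "(shift (a + b) ^^ (n + k)) (m x y) = 0" if "(shift a ^^ n) x = 0" "(shift b ^^ k) y = 0"
    for n k x y
    using that
  proof (induction "n + k" arbitrary: n k x y rule: less_induct)
    case less
    show ?case
    proof (cases "n = 0 \<or> k = 0")
      case True
      with less.prems show ?thesis by (auto simp: m_linear)
    next
      case False
      then obtain n' k' where n: "n = Suc n'" and k: "k = Suc k'"
        by (metis not0_implies_Suc)
      have left: "(shift (a + b) ^^ (n' + k)) (m (shift a x) y) = 0"
        using less.hyps[of n' k "shift a x" y] less.prems n by (simp add: funpow_Suc_right del: funpow.simps)
      have right: "(shift (a + b) ^^ (n + k')) (m x (shift b y)) = 0"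
        using less.hyps[of n k' x "shift b y"] less.prems k by (simp add: funpow_Suc_right del: funpow.simps)
      have "(shift (a + b) ^^ (n + k)) (m x y) = (shift (a + b) ^^ (n' + k)) (shift (a + b) (m x y))"
        using n by (simp only: add_Suc funpow_Suc_right o_apply)
      also have "\<dots> = (shift (a + b) ^^ (n' + k)) (m (shift a x) y)
          + (shift (a + b) ^^ (n + k')) (m x (shift b y))"
        using n k by (simp only: shift_m shift_power_add add_Suc add_Suc_right)
      finally show ?thesis
        by (simp only: left right add_0)
    qed
  qed
  with assms show ?thesis unfolding gen_eigenspace_def by blast
qed

lemma gen_eigenspace_symplectic_orthogonal:
  assumes "x \<in> gen_eigenspace a" "y \<in> gen_eigenspace b" "a + b \<noteq> 0"
  shows "\<omega> x y = 0"
  using gen_eigenspace_orthogonal[OF gen_eigenspace_D[OF assms(1)] assms(2,3)] by (simp add: B_D)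

lemma positive_cone_isotropic_subalgebra:
  assumes "positive_cone P"
  defines "U \<equiv> span (\<Union>c\<in>P. gen_eigenspace c)"
  shows "subalgebra scale m U" "totally_isotropic B U" "totally_isotropic \<omega> U"
proof -
  have add: "c + d \<in> P" if "c \<in> P" "d \<in> P" for c d
    using assms(1) that by (rule positive_cone_add)
  have nonzero: "c + d \<noteq> 0" if "c \<in> P" "d \<in> P" for c d
    using add[OF that] positive_cone_zero[OF assms(1)] by auto
  have "m x y \<in> U"
    if xy: "x \<in> (\<Union>c\<in>P. gen_eigenspace c)" "y \<in> (\<Union>c\<in>P. gen_eigenspace c)" for x y
  proof -
    obtain c d where cd: "c \<in> P" "d \<in> P" "x \<in> gen_eigenspace c" "y \<in> gen_eigenspace d"
      using xy by blast
    then have "m x y \<in> gen_eigenspace (c + d)"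
      by (intro gen_eigenspace_mult)
    with add[OF cd(1,2)] have "m x y \<in> (\<Union>c\<in>P. gen_eigenspace c)"
      by blast
    then show ?thesis unfolding U_def by (rule span_base)
  qed
  then show "subalgebra scale m U"
    unfolding U_def by (intro subalgebra_span bilinear_m)
  have "B x y = 0 \<and> \<omega> x y = 0"
    if xy: "x \<in> (\<Union>c\<in>P. gen_eigenspace c)" "y \<in> (\<Union>c\<in>P. gen_eigenspace c)" for x y
  proof -
    obtain c d where cd: "c \<in> P" "d \<in> P" "x \<in> gen_eigenspace c" "y \<in> gen_eigenspace d"
      using xy by blast
    with nonzero[OF cd(1,2)] show ?thesis
      by (simp add: gen_eigenspace_orthogonal gen_eigenspace_symplectic_orthogonal)
  qed
  then have "totally_isotropic B (\<Union>c\<in>P. gen_eigenspace c)"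
    and "totally_isotropic \<omega> (\<Union>c\<in>P. gen_eigenspace c)"
    unfolding totally_isotropic_def by blast+
  then show "totally_isotropic B U" "totally_isotropic \<omega> U"
    unfolding U_def by (simp_all add: totally_isotropic_span bilinear_B bilinear_\<omega>)
qed

theorem isotropic_subalgebra_splitting:
  assumes "alg_closed TYPE('k)"
  shows "\<exists>U V. subalgebra scale m U \<and> subalgebra scale m V \<and> direct_sum U V \<and>
    totally_isotropic B U \<and> totally_isotropic B V \<and> totally_isotropic \<omega> U \<and> totally_isotropic \<omega> V"
proof -
  obtain S where S: "finite S" "span (\<Union>c\<in>S. gen_eigenspace c) = UNIV"
    using span_gen_eigenspaces[OF assms] by blast
  obtain P where P: "positive_cone P" "\<And>c. c \<in> S - {0} \<Longrightarrow> c \<in> P \<or> - c \<in> P"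
    using positive_cone_exists[of "S - {0}"] S(1) by blast
  define U where "U = span (\<Union>c\<in>P. gen_eigenspace c)"
  define V where "V = span (\<Union>c\<in>uminus ` P. gen_eigenspace c)"
  note U = positive_cone_isotropic_subalgebra[OF P(1), folded U_def]
  note V = positive_cone_isotropic_subalgebra[OF positive_cone_uminus[OF P(1)], folded V_def]
  have "gen_eigenspace c \<subseteq>
      insert 0 ((\<Union>c\<in>P. gen_eigenspace c) \<union> (\<Union>c\<in>uminus ` P. gen_eigenspace c))"
    if "c \<in> S" for c
  proof (cases "c = 0")
    case True
    with gen_eigenspace_0[OF inj_D] show ?thesis by blast
  next
    case False
    with P(2) that have "c \<in> P \<or> c \<in> uminus ` P"
      by (metis DiffI image_eqI minus_minus singletonD)
    then show ?thesis by blast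
  qed
  then have "span (\<Union>c\<in>S. gen_eigenspace c) \<subseteq>
      span ((\<Union>c\<in>P. gen_eigenspace c) \<union> (\<Union>c\<in>uminus ` P. gen_eigenspace c))"
    by (metis (no_types, lifting) UN_least span_insert_0 span_mono)
  then have "\<exists>u\<in>U. \<exists>v\<in>V. x = u + v" for x
    unfolding U_def V_def span_Un S(2) by blast
  then have "direct_sum U V"
    using U V by (intro direct_sum_totally_isotropic[OF bilinear_B nondegenerate_B])
      (auto simp: subalgebra_def)
  with U V show ?thesis by blast
qed

end

theorem mainTheorem11:
  fixes scale :: "'k::field_char_0 \<Rightarrow> 'v::ab_group_add \<Rightarrow> 'v"
    and Basis :: "'v set"
    and m :: "'v \<Rightarrow> 'v \<Rightarrow> 'v"
    and B \<omega> :: "'v \<Rightarrow> 'v \<Rightarrow> 'k"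
  assumes "alg_closed TYPE('k)"
    and "finite_dimensional_vector_space scale Basis"
    and "jordan_algebra scale m"
    and "pseudo_euclidean scale m B"
    and "symplectic_form scale m \<omega>"
  shows "\<exists>U V. symplectic_jordan_manin scale m B \<omega> U V"
proof -
  have "bilinear_prod scale m" "\<And>x y. m x y = m y x"
    using assms(3) unfolding jordan_algebra_def by blast+
  with assms(2,4,5) interpret symplectic_pseudo_euclidean_algebra scale Basis m B \<omega>
    by (simp add: symplectic_pseudo_euclidean_algebra_def symplectic_pseudo_euclidean_algebra_axioms_def)
  show ?thesis
    using isotropic_subalgebra_splitting[OF assms(1)] assms(3-5)
    unfolding symplectic_jordan_manin_def jordan_manin_def by blast
qed

end
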